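(* Consider the action of the translation subgroup $\mathbb{R}^3\subset SE(3)$ on $\mathbb{R}^6$ with coordinates $(\boldsymbol{\omega},\mathbf{v})=(\omega_1,\omega_2,\omega_3,v_1,v_2,v_3)$ given by $\mathbf{r}\cdot(\boldsymbol{\omega},\mathbf{v})=(\boldsymbol{\omega},\ \mathbf{r}\times\boldsymbol{\omega}+\mathbf{v})$. Then $\{\omega_1,\omega_2,\omega_3,\ \boldsymbol{\omega}\cdot\mathbf{v}\}$ is a SAGBI basis, with respect to the lexicographic order $\omega_1>\omega_2>\omega_3>v_1>v_2>v_3$, for the algebra $\mathbb{R}[\omega_1,\dots,v_3]^{\mathbb{R}^3}$ of polynomials invariant under this action; in particular it generates that algebra.
   Context: A SAGBI basis of a subalgebra $A$ of a polynomial ring, with respect to a term order, is a subset $S\subseteq A$ such that the leading monomial of every nonzero $f\in A$ is a product of leading monomials of elements of $S$. *)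

theory Defs
  imports Complex_Main "HOL-Library.Poly_Mapping" "HOL-Library.Multiset"
begin

text \<open>Variables are indexed by naturals; the six coordinates are
x0 = omega1, x1 = omega2, x2 = omega3, x3 = v1, x4 = v2, x5 = v3.\<close>

type_synonym monom = "nat \<Rightarrow>\<^sub>0 nat"
type_synonym rpoly = "monom \<Rightarrow>\<^sub>0 real"

definition Var :: "nat \<Rightarrow> rpoly" where
  "Var i = Poly_Mapping.single (Poly_Mapping.single i 1) 1"

definition Const :: "real \<Rightarrow> rpoly" where
  "Const c = Poly_Mapping.single 0 c"

definition in_R6 :: "rpoly \<Rightarrow> bool" where
  "in_R6 p \<longleftrightarrow> (\<forall>m \<in> Poly_Mapping.keys p. Poly_Mapping.keys m \<subseteq> {..<6})"

definition eval :: "rpoly \<Rightarrow> (nat \<Rightarrow> real) \<Rightarrow> real" where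
  "eval p x = (\<Sum>m \<in> Poly_Mapping.keys p. Poly_Mapping.lookup p m * (\<Prod>i \<in> Poly_Mapping.keys m. x i ^ Poly_Mapping.lookup m i))"

definition act :: "real \<Rightarrow> real \<Rightarrow> real \<Rightarrow> (nat \<Rightarrow> real) \<Rightarrow> (nat \<Rightarrow> real)" where
  "act r1 r2 r3 x = x(3 := x 3 + (r2 * x 2 - r3 * x 1),
                      4 := x 4 + (r3 * x 0 - r1 * x 2),
                      5 := x 5 + (r1 * x 1 - r2 * x 0))"

definition invariant_alg :: "rpoly set" where
  "invariant_alg = {p. in_R6 p \<and> (\<forall>r1 r2 r3 x. eval p (act r1 r2 r3 x) = eval p x)}"

definition lex_less :: "monom \<Rightarrow> monom \<Rightarrow> bool" where
  "lex_less m m' \<longleftrightarrow> (\<exists>i. (\<forall>j<i. Poly_Mapping.lookup m j = Poly_Mapping.lookup m' j) \<and> Poly_Mapping.lookup m i < Poly_Mapping.lookup m' i)"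

definition lead_monom :: "rpoly \<Rightarrow> monom" where
  "lead_monom p = (THE m. m \<in> Poly_Mapping.keys p \<and> (\<forall>m' \<in> Poly_Mapping.keys p. m' \<noteq> m \<longrightarrow> lex_less m' m))"

definition sagbi_basis :: "rpoly set \<Rightarrow> rpoly set \<Rightarrow> bool" where
  "sagbi_basis S A \<longleftrightarrow> S \<subseteq> A \<and>
     (\<forall>f \<in> A. f \<noteq> 0 \<longrightarrow>
        (\<exists>M :: rpoly multiset. set_mset M \<subseteq> S - {0} \<and>
              lead_monom f = sum_mset (image_mset lead_monom M)))"

inductive_set subalg :: "rpoly set \<Rightarrow> rpoly set" for S where
  const: "Const c \<in> subalg S"
| gen: "s \<in> S \<Longrightarrow> s \<in> subalg S"
| add: "p \<in> subalg S \<Longrightarrow> q \<in> subalg S \<Longrightarrow> p + q \<in> subalg S"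
| mult: "p \<in> subalg S \<Longrightarrow> q \<in> subalg S \<Longrightarrow> p * q \<in> subalg S"

end

theory Submission
  imports Defs
begin

text \<open>Translating by \<open>r = (0, 0, t)\<close> and \<open>r = (0, -t, 0)\<close> and differentiating at \<open>t = 0\<close>
  shows that every invariant \<open>f\<close> is annihilated by \<open>\<omega>\<^sub>1 \<partial>/\<partial>v\<^sub>2 - \<omega>\<^sub>2 \<partial>/\<partial>v\<^sub>1\<close> and
  \<open>\<omega>\<^sub>1 \<partial>/\<partial>v\<^sub>3 - \<omega>\<^sub>3 \<partial>/\<partial>v\<^sub>1\<close>. Comparing coefficients, a factor \<open>v\<^sub>2\<close> (or \<open>v\<^sub>3\<close>) in the leading
  monomial of \<open>f\<close> would force a lexicographically larger monomial of \<open>f\<close> with one more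
  \<open>\<omega>\<^sub>1\<close>, and every monomial of \<open>f\<close> contains \<open>v\<^sub>1\<close> at most as often as \<open>\<omega>\<^sub>1\<close>. So the leading
  monomial is \<open>\<omega>\<^sub>1\<^sup>a \<omega>\<^sub>2\<^sup>b \<omega>\<^sub>3\<^sup>c (\<omega>\<^sub>1v\<^sub>1)\<^sup>d\<close>, the leading monomial of
  \<open>\<omega>\<^sub>1\<^sup>a \<omega>\<^sub>2\<^sup>b \<omega>\<^sub>3\<^sup>c (\<omega>\<cdot>v)\<^sup>d\<close>. Subtracting a multiple of this product lowers the leading
  monomial, and the lexicographic order on monomials in six variables is well-founded.\<close>

abbreviation lookup :: "('a \<Rightarrow>\<^sub>0 'b::zero) \<Rightarrow> 'a \<Rightarrow> 'b" where
  "lookup \<equiv> Poly_Mapping.lookup"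

abbreviation keys :: "('a \<Rightarrow>\<^sub>0 'b::zero) \<Rightarrow> 'a set" where
  "keys \<equiv> Poly_Mapping.keys"

abbreviation unit_monom :: "nat \<Rightarrow> monom" where
  "unit_monom i \<equiv> Poly_Mapping.single i 1"

section \<open>Evaluation of polynomials\<close>

definition eval_monom :: "monom \<Rightarrow> (nat \<Rightarrow> real) \<Rightarrow> real" where
  "eval_monom m x = (\<Prod>i\<in>keys m. x i ^ lookup m i)"

lemma eval_monom_superset:
  "finite K \<Longrightarrow> keys m \<subseteq> K \<Longrightarrow> eval_monom m x = (\<Prod>i\<in>K. x i ^ lookup m i)"
  unfolding eval_monom_def by (rule prod.mono_neutral_left) (auto simp: in_keys_iff)

lemma eval_monom_add: "eval_monom (m + n) x = eval_monom m x * eval_monom n x"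
  using keys_add[of m n]
  by (simp add: eval_monom_superset[of "keys m \<union> keys n"] lookup_add power_add prod.distrib)

lemma eval_eq_sum_monoms: "eval p x = (\<Sum>m\<in>keys p. lookup p m * eval_monom m x)"
  by (simp add: eval_def eval_monom_def)

lemma eval_superset:
  "finite M \<Longrightarrow> keys p \<subseteq> M \<Longrightarrow> eval p x = (\<Sum>m\<in>M. lookup p m * eval_monom m x)"
  unfolding eval_eq_sum_monoms by (rule sum.mono_neutral_left) (auto simp: in_keys_iff)

lemma eval_0 [simp]: "eval 0 x = 0"
  by (simp add: eval_def)

lemma eval_single_term: "eval (Poly_Mapping.single m c) x = c * eval_monom m x"
  by (simp add: eval_superset[of "{m}"])

lemma eval_Const [simp]: "eval (Const c) x = c"
  by (simp add: Const_def eval_single_term eval_monom_def)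

lemma eval_Var [simp]: "eval (Var i) x = x i"
  by (simp add: Var_def eval_single_term eval_monom_def)

lemma eval_add: "eval (p + q) x = eval p x + eval q x"
  using keys_add[of p q]
  by (simp add: eval_superset[of "keys p \<union> keys q"] lookup_add sum.distrib distrib_right)

lemma eval_uminus: "eval (- p) x = - eval p x"
  by (simp add: eval_eq_sum_monoms sum_negf)

lemma eval_diff: "eval (p - q) x = eval p x - eval q x"
  using eval_add[of p "- q" x] by (simp add: eval_uminus)

lemma eval_sum: "eval (sum f A) x = (\<Sum>a\<in>A. eval (f a) x)"
  by (induction A rule: infinite_finite_induct) (auto simp: eval_add)

lemma poly_eq_sum_monoms: "p = (\<Sum>m\<in>keys p. Poly_Mapping.single m (lookup p m))"
  by (rule poly_mapping_eqI) (auto simp: lookup_sum lookup_single when_def in_keys_iff)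

lemma mult_eq_sum_monoms:
  "p * q = (\<Sum>u\<in>keys p. \<Sum>v\<in>keys q. Poly_Mapping.single (u + v) (lookup p u * lookup q v))"
  by (subst poly_eq_sum_monoms[of p], subst poly_eq_sum_monoms[of q])
     (simp add: sum_product mult_single)

lemma eval_mult: "eval (p * q) x = eval p x * eval q x"
  by (simp only: mult_eq_sum_monoms eval_sum eval_single_term)
     (simp add: eval_monom_add eval_eq_sum_monoms sum_product algebra_simps)

text \<open>Kronecker substitution \<open>x\<^sub>i = t ^ B ^ i\<close> turns a polynomial whose exponents are
  all below \<open>B\<close> into a univariate one without merging distinct monomials.\<close>

lemma base_expansion_unique:
  fixes a b :: "nat \<Rightarrow> nat"
  assumes "\<And>k. k < n \<Longrightarrow> a k < B" "\<And>k. k < n \<Longrightarrow> b k < B"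
    and "(\<Sum>k<n. a k * B ^ k) = (\<Sum>k<n. b k * B ^ k)"
  shows "k < n \<Longrightarrow> a k = b k"
  using assms
proof (induction n arbitrary: a b k)
  case 0
  then show ?case by simp
next
  case (Suc n)
  have expand: "(\<Sum>k<Suc n. c k * B ^ k) = c 0 + B * (\<Sum>k<n. c (Suc k) * B ^ k)" for c
    by (simp only: sum.lessThan_Suc_shift) (simp add: sum_distrib_left mult.left_commute)
  have digits: "a 0 < B" "b 0 < B"
    using Suc.prems(2,3) by auto
  have eq: "a 0 + B * (\<Sum>k<n. a (Suc k) * B ^ k) = b 0 + B * (\<Sum>k<n. b (Suc k) * B ^ k)"
    using Suc.prems(4) by (simp only: expand)
  have head: "a 0 = b 0"
    using arg_cong[OF eq, of "\<lambda>z. z mod B"] digits by simp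
  then have "(\<Sum>k<n. a (Suc k) * B ^ k) = (\<Sum>k<n. b (Suc k) * B ^ k)"
    using eq digits by simp
  then have tail: "k' < n \<Longrightarrow> a (Suc k') = b (Suc k')" for k'
    using Suc.IH[of k' "\<lambda>k. a (Suc k)" "\<lambda>k. b (Suc k)"] Suc.prems(2,3) by simp
  show ?case
    using Suc.prems(1) head tail by (cases k) auto
qed

lemma eval_kronecker:
  assumes "\<And>m. m \<in> keys p \<Longrightarrow> keys m \<subseteq> {..<n}"
  shows "eval p (\<lambda>i. t ^ B ^ i) = (\<Sum>m\<in>keys p. lookup p m * t ^ (\<Sum>i<n. lookup m i * B ^ i))"
proof -
  have "eval_monom m (\<lambda>i. t ^ B ^ i) = t ^ (\<Sum>i<n. lookup m i * B ^ i)" if "m \<in> keys p" for m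
    using assms[OF that]
    by (simp add: eval_monom_superset[of "{..<n}"] power_sum power_mult[symmetric] mult.commute)
  then show ?thesis
    by (simp add: eval_eq_sum_monoms)
qed

lemma kronecker_exponent_inj:
  fixes m m' :: monom
  assumes "keys m \<subseteq> {..<n}" "keys m' \<subseteq> {..<n}" "\<And>i. lookup m i < B" "\<And>i. lookup m' i < B"
    and "(\<Sum>i<n. lookup m i * B ^ i) = (\<Sum>i<n. lookup m' i * B ^ i)"
  shows "m = m'"
proof (rule poly_mapping_eqI)
  fix i
  show "lookup m i = lookup m' i"
  proof (cases "i < n")
    case True
    then show ?thesis
      using base_expansion_unique[of n "lookup m" B "lookup m'" i] assms(3-5) by simp
  next
    case False
    then have "i \<notin> keys m" "i \<notin> keys m'"
      using assms(1,2) by auto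
    then show ?thesis
      by (simp add: in_keys_iff)
  qed
qed

lemma distinct_powers_coeff_eq_0:
  fixes c :: "'a \<Rightarrow> real"
  assumes "finite A" "inj_on e A" "\<And>t. (\<Sum>a\<in>A. c a * t ^ e a) = 0" "a \<in> A"
  shows "c a = 0"
proof -
  define N where "N = Max (e ` A)"
  define d where "d j = (\<Sum>a' | a' \<in> A \<and> e a' = j. c a')" for j
  have "(\<Sum>j\<le>N. d j * t ^ j) = 0" for t :: real
  proof -
    have "(\<Sum>j\<le>N. d j * t ^ j) = (\<Sum>j\<le>N. \<Sum>a' | a' \<in> A \<and> e a' = j. c a' * t ^ e a')"
      unfolding d_def sum_distrib_right by (intro sum.cong refl) auto
    also have "\<dots> = (\<Sum>a'\<in>A. c a' * t ^ e a')"
      by (rule sum.group) (use assms(1) in \<open>auto simp: N_def\<close>)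
    finally show ?thesis
      using assms(3) by simp
  qed
  moreover have "e a \<le> N"
    using assms(1,4) by (simp add: N_def)
  ultimately have "d (e a) = 0"
    using polyfun_eq_0 by blast
  moreover have "{a' \<in> A. e a' = e a} = {a}"
    using assms(2,4) by (auto dest: inj_onD)
  ultimately show ?thesis
    by (simp add: d_def)
qed

lemma eval_all_0_iff_0: "(\<forall>x. eval p x = 0) \<longleftrightarrow> p = 0"
proof
  assume zero: "\<forall>x. eval p x = 0"
  obtain n where n: "\<And>m. m \<in> keys p \<Longrightarrow> keys m \<subseteq> {..<n}"
    using finite_nat_set_iff_bounded[of "\<Union>m\<in>keys p. keys m"] by fastforce
  obtain B where B: "\<And>m i. m \<in> keys p \<Longrightarrow> lookup m i < B"
  proof -
    obtain B where "\<forall>c\<in>insert 0 (\<Union>m\<in>keys p. Poly_Mapping.range m). c < B"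
      using finite_nat_set_iff_bounded by (metis finite_UN_I finite_insert finite_keys finite_range)
    then show ?thesis
      by (metis that UN_I in_keys_iff in_keys_lookup_in_range insertCI)
  qed
  define kron where "kron m = (\<Sum>i<n. lookup m i * B ^ i)" for m
  have "inj_on kron (keys p)"
  proof (rule inj_onI)
    fix m m' assume "m \<in> keys p" "m' \<in> keys p" "kron m = kron m'"
    then show "m = m'"
      using n B by (intro kronecker_exponent_inj[of m n m' B]) (simp_all add: kron_def)
  qed
  moreover have "(\<Sum>m\<in>keys p. lookup p m * t ^ kron m) = 0" for t :: real
    using zero eval_kronecker[of p n t B, OF n] by (simp add: kron_def)
  ultimately have "lookup p m = 0" if "m \<in> keys p" for m
    using distinct_powers_coeff_eq_0[of "keys p" kron "lookup p" m] that by simp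
  then show "p = 0"
    by (metis equals0I in_keys_iff keys_eq_empty)
qed simp

section \<open>Partial derivatives\<close>

definition partial_deriv :: "nat \<Rightarrow> rpoly \<Rightarrow> rpoly" where
  "partial_deriv i p =
     (\<Sum>m\<in>keys p. Poly_Mapping.single (m - unit_monom i) (of_nat (lookup m i) * lookup p m))"

lemma add_unit_monom_diff:
  "0 < lookup m i \<Longrightarrow> m - unit_monom i + unit_monom i = m"
  by (rule poly_mapping_eqI) (auto simp: lookup_add lookup_minus lookup_single when_def)

lemma lookup_partial_deriv:
  "lookup (partial_deriv i p) n = of_nat (lookup n i + 1) * lookup p (n + unit_monom i)"
proof -
  have term_eq: "(of_nat (lookup m i) * lookup p m when m - unit_monom i = n)
      = (if m = n + unit_monom i then of_nat (lookup n i + 1) * lookup p m else 0)" for m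
  proof (cases "lookup m i = 0")
    case True
    then have "m \<noteq> n + unit_monom i"
      by (auto simp: lookup_add)
    then show ?thesis
      using True by simp
  next
    case False
    then have "m - unit_monom i = n \<longleftrightarrow> m = n + unit_monom i"
      using add_unit_monom_diff[of m i] by auto
    then show ?thesis
      by (auto simp: lookup_add)
  qed
  have "lookup (partial_deriv i p) n
      = (\<Sum>m\<in>keys p. if m = n + unit_monom i then of_nat (lookup n i + 1) * lookup p m else 0)"
    unfolding partial_deriv_def lookup_sum lookup_single term_eq ..
  then show ?thesis
    by (simp add: in_keys_iff)
qed

lemma eval_partial_deriv:
  "eval (partial_deriv i p) x
     = (\<Sum>m\<in>keys p. of_nat (lookup m i) * lookup p m * eval_monom (m - unit_monom i) x)"
  by (simp add: partial_deriv_def eval_sum eval_single_term)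

lemma has_real_derivative_eval_monom_line:
  assumes "finite K" "keys m \<subseteq> K"
  shows "((\<lambda>t. eval_monom m (\<lambda>k. x k + t * w k)) has_real_derivative
           (\<Sum>k\<in>K. w k * of_nat (lookup m k) * eval_monom (m - unit_monom k) x)) (at 0)"
proof -
  have factor: "((\<lambda>t. (x k + t * w k) ^ lookup m k) has_real_derivative
                   of_nat (lookup m k) * x k ^ (lookup m k - 1) * w k) (at 0)" for k
    by (auto intro!: derivative_eq_intros)
  have "((\<lambda>t. \<Prod>k\<in>K. (x k + t * w k) ^ lookup m k) has_real_derivative
          (\<Sum>k\<in>K. of_nat (lookup m k) * x k ^ (lookup m k - 1) * w k
                     * (\<Prod>l\<in>K - {k}. (x l + 0 * w l) ^ lookup m l))) (at 0)"
    by (rule has_field_derivative_prod) (rule factor)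
  moreover have "eval_monom (m - unit_monom k) x
      = x k ^ (lookup m k - 1) * (\<Prod>l\<in>K - {k}. x l ^ lookup m l)" if "k \<in> K" for k
  proof -
    have "keys (m - unit_monom k) \<subseteq> K"
      using assms(2) by (auto simp: in_keys_iff lookup_minus)
    then show ?thesis
      using assms(1) that
      by (simp add: eval_monom_superset[of K] prod.remove lookup_minus lookup_single)
  qed
  ultimately show ?thesis
    using assms by (simp add: eval_monom_superset[of K] mult_ac cong: sum.cong)
qed

lemma has_real_derivative_eval_line:
  assumes "finite K" "\<And>m. m \<in> keys f \<Longrightarrow> keys m \<subseteq> K"
  shows "((\<lambda>t. eval f (\<lambda>k. x k + t * w k)) has_real_derivative
           (\<Sum>k\<in>K. w k * eval (partial_deriv k f) x)) (at 0)"
proof -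
  have "((\<lambda>t. eval f (\<lambda>k. x k + t * w k)) has_real_derivative
          (\<Sum>m\<in>keys f. lookup f m *
             (\<Sum>k\<in>K. w k * of_nat (lookup m k) * eval_monom (m - unit_monom k) x))) (at 0)"
    unfolding eval_eq_sum_monoms
    by (intro DERIV_sum DERIV_cmult has_real_derivative_eval_monom_line assms)
  moreover have "(\<Sum>m\<in>keys f. lookup f m *
             (\<Sum>k\<in>K. w k * of_nat (lookup m k) * eval_monom (m - unit_monom k) x))
      = (\<Sum>k\<in>K. w k * eval (partial_deriv k f) x)"
    by (simp add: eval_partial_deriv sum_distrib_left sum.swap[of _ K] mult_ac)
  ultimately show ?thesis
    by simp
qed

text \<open>The one-parameter flow \<open>x\<^sub>i \<mapsto> x\<^sub>i + t x\<^sub>a, x\<^sub>j \<mapsto> x\<^sub>j - t x\<^sub>b\<close> has infinitesimal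
  generator \<open>x\<^sub>a \<partial>\<^sub>i - x\<^sub>b \<partial>\<^sub>j\<close>, which must annihilate every invariant polynomial.\<close>

lemma partial_deriv_eq_if_flow_invariant:
  assumes "i \<noteq> j"
    and invariant: "\<And>t x. eval f (x(i := x i + t * x a, j := x j - t * x b)) = eval f x"
  shows "Var a * partial_deriv i f = Var b * partial_deriv j f"
proof -
  define K where "K = insert i (insert j (\<Union>m\<in>keys f. keys m))"
  have "eval (Var a * partial_deriv i f - Var b * partial_deriv j f) x = 0" for x
  proof -
    define w where "w k = (if k = i then x a else 0) + (if k = j then - x b else 0)" for k
    have flow: "(\<lambda>k. x k + t * w k) = x(i := x i + t * x a, j := x j - t * x b)" for t
      using \<open>i \<noteq> j\<close> by (auto simp: w_def)
    have "((\<lambda>t. eval f x) has_real_derivative (\<Sum>k\<in>K. w k * eval (partial_deriv k f) x)) (at 0)"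
      using has_real_derivative_eval_line[of K f x w] by (auto simp: K_def flow invariant)
    then have "(\<Sum>k\<in>K. w k * eval (partial_deriv k f) x) = 0"
      using DERIV_const DERIV_unique by blast
    moreover have "(\<Sum>k\<in>K. w k * eval (partial_deriv k f) x)
        = (\<Sum>k\<in>K. (if k = i then x a * eval (partial_deriv k f) x else 0)
                   + (if k = j then - x b * eval (partial_deriv k f) x else 0))"
      using \<open>i \<noteq> j\<close> by (intro sum.cong) (auto simp: w_def)
    then have "(\<Sum>k\<in>K. w k * eval (partial_deriv k f) x)
        = x a * eval (partial_deriv i f) x - x b * eval (partial_deriv j f) x"
      by (simp add: sum.distrib K_def)
    ultimately show ?thesis
      by (simp add: eval_diff eval_mult)
  qed
  then show ?thesis
    using eval_all_0_iff_0 by (metis right_minus_eq)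
qed

section \<open>Leading monomials\<close>

lemma lex_less_iff_less: "lex_less m m' \<longleftrightarrow> m < m'"
  by (auto simp: lex_less_def less_poly_mapping.rep_eq less_fun_def)

lemma monom_lessI:
  "(\<And>k. k < i \<Longrightarrow> lookup m k = lookup n k) \<Longrightarrow> lookup m i < lookup n i \<Longrightarrow> m < (n :: monom)"
  by (auto simp: less_poly_mapping.rep_eq less_fun_def)

lemma lead_monom_eqI:
  assumes "a \<in> keys p" "\<And>u. u \<in> keys p \<Longrightarrow> u \<le> a"
  shows "lead_monom p = a"
  unfolding lead_monom_def lex_less_iff_less
proof (rule the_equality)
  show "a \<in> keys p \<and> (\<forall>u\<in>keys p. u \<noteq> a \<longrightarrow> u < a)"
    using assms by (auto simp: order.order_iff_strict)
  show "b = a" if "b \<in> keys p \<and> (\<forall>u\<in>keys p. u \<noteq> b \<longrightarrow> u < b)" for b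
  proof -
    have "b \<le> a" "b \<noteq> a \<Longrightarrow> a < b"
      using that assms by auto
    then show ?thesis
      by (metis leD)
  qed
qed

lemma lead_monom_eq_Max: "p \<noteq> 0 \<Longrightarrow> lead_monom p = Max (keys p)"
  by (rule lead_monom_eqI) auto

lemma lead_monom_in_keys: "p \<noteq> 0 \<Longrightarrow> lead_monom p \<in> keys p"
  by (simp add: lead_monom_eq_Max)

lemma le_lead_monom: "u \<in> keys p \<Longrightarrow> u \<le> lead_monom p"
  by (subst lead_monom_eq_Max) auto

definition lead_coeff :: "rpoly \<Rightarrow> real" where
  "lead_coeff p = lookup p (lead_monom p)"

lemma lead_coeff_eq_0_iff: "lead_coeff p = 0 \<longleftrightarrow> p = 0"
  using lead_monom_in_keys[of p] by (auto simp: lead_coeff_def in_keys_iff)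

lemma lead_monom_single:
  "c \<noteq> 0 \<Longrightarrow> lead_monom (Poly_Mapping.single m c) = m"
  by (rule lead_monom_eqI) auto

lemma lead_coeff_single:
  "c \<noteq> 0 \<Longrightarrow> lead_coeff (Poly_Mapping.single m c) = c"
  by (simp add: lead_coeff_def lead_monom_single)

lemma lead_monom_mult:
  assumes "p \<noteq> 0" "q \<noteq> 0"
  shows "lead_monom (p * q) = lead_monom p + lead_monom q"
    and "lead_coeff (p * q) = lead_coeff p * lead_coeff q"
proof -
  let ?a = "lead_monom p" and ?b = "lead_monom q"
  have cancel: "u + v = ?a + ?b \<longleftrightarrow> u = ?a \<and> v = ?b" if "u \<in> keys p" "v \<in> keys q" for u v
  proof
    assume sum_eq: "u + v = ?a + ?b"
    have "u \<le> ?a" "v \<le> ?b"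
      using that by (simp_all add: le_lead_monom)
    moreover have "\<not> u < ?a"
    proof
      assume "u < ?a"
      then have "u + v < ?a + ?b"
        using \<open>v \<le> ?b\<close> by (rule add_less_le_mono)
      then show False
        using sum_eq by simp
    qed
    ultimately have "u = ?a"
      by simp
    then show "u = ?a \<and> v = ?b"
      using sum_eq by simp
  qed simp
  have "lookup (p * q) (?a + ?b)
      = (\<Sum>u\<in>keys p. if u = ?a then (\<Sum>v\<in>keys q. if v = ?b then lookup p ?a * lookup q v else 0) else 0)"
    unfolding mult_eq_sum_monoms lookup_sum lookup_single
    by (intro sum.cong refl) (auto simp: cancel when_def)
  also have "\<dots> = lead_coeff p * lead_coeff q"
    using assms by (simp add: lead_coeff_def lead_monom_in_keys)
  finally have coeff: "lookup (p * q) (?a + ?b) = lead_coeff p * lead_coeff q" .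
  show lm: "lead_monom (p * q) = ?a + ?b"
  proof (rule lead_monom_eqI)
    show "?a + ?b \<in> keys (p * q)"
      using coeff assms by (simp add: in_keys_iff lead_coeff_eq_0_iff)
    show "w \<le> ?a + ?b" if "w \<in> keys (p * q)" for w
      using that keys_mult[of p q] by (auto intro!: add_mono le_lead_monom)
  qed
  show "lead_coeff (p * q) = lead_coeff p * lead_coeff q"
    using coeff by (simp add: lead_coeff_def lm)
qed

lemma lead_monom_prod_mset:
  assumes "0 \<notin># M"
  shows "lead_monom (prod_mset M) = sum_mset (image_mset lead_monom M)
       \<and> lead_coeff (prod_mset M) = prod_mset (image_mset lead_coeff M)"
  using assms
proof (induction M)
  case empty
  show ?case
    using lead_monom_single[of 1 0] lead_coeff_single[of 1 0] by simp
next
  case (add x M)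
  then have "x \<noteq> 0" "prod_mset M \<noteq> 0"
    by (auto simp: prod_mset_zero_iff)
  with add show ?case
    by (simp add: lead_monom_mult)
qed

lemma lead_monom_diff_less:
  assumes "p \<noteq> q" "lead_monom q = lead_monom p" "lead_coeff q = lead_coeff p"
  shows "lead_monom (p - q) < lead_monom p"
proof -
  have "u < lead_monom p" if "u \<in> keys (p - q)" for u
  proof -
    have "u \<le> lead_monom p"
      using that keys_diff[of p q] le_lead_monom[of u p] le_lead_monom[of u q] assms(2) by auto
    moreover have "u \<noteq> lead_monom p"
      using that assms(3) by (auto simp: lead_coeff_def in_keys_iff lookup_minus assms(2))
    ultimately show ?thesis
      by simp
  qed
  then show ?thesis
    using lead_monom_in_keys[of "p - q"] assms(1) by simp
qed

lemma monom_less_imp_lex: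
  assumes "keys n \<subseteq> {..<k}" "m < n"
  shows "(map (lookup m) [0..<k], map (lookup n) [0..<k]) \<in> lex less_than"
proof -
  obtain i where less: "lookup m i < lookup n i" and eq: "\<And>j. j < i \<Longrightarrow> lookup m j = lookup n j"
    using assms(2) by (auto simp: less_poly_mapping.rep_eq less_fun_def)
  then have "i \<in> keys n"
    by (simp add: in_keys_iff)
  then have "[0..<k] = [0..<i] @ i # [Suc i..<k]"
    using assms(1) upt_add_eq_append[of 0 i "k - i"] upt_conv_Cons[of i k] by auto
  moreover have "map (lookup m) [0..<i] = map (lookup n) [0..<i]"
    using eq by simp
  ultimately have
    "map (lookup m) [0..<k] = map (lookup n) [0..<i] @ lookup m i # map (lookup m) [Suc i..<k]"
    "map (lookup n) [0..<k] = map (lookup n) [0..<i] @ lookup n i # map (lookup n) [Suc i..<k]"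
    by simp_all
  then show ?thesis
    unfolding lex_conv using less by (simp (no_asm_simp)) blast
qed

text \<open>Subduction: if every leading term of \<open>A\<close> is the leading term of an element of
  \<open>subalg S\<close>, subtracting it lowers the leading monomial, which terminates because the
  lexicographic order on monomials in finitely many variables is well-founded.\<close>

lemma subset_subalg_by_subduction:
  assumes subalg_subset: "subalg S \<subseteq> A"
    and diff: "\<And>p q. p \<in> A \<Longrightarrow> q \<in> A \<Longrightarrow> p - q \<in> A"
    and bounded: "\<And>f. f \<in> A \<Longrightarrow> f \<noteq> 0 \<Longrightarrow> keys (lead_monom f) \<subseteq> {..<n}"
    and lead_term: "\<And>f. f \<in> A \<Longrightarrow> f \<noteq> 0 \<Longrightarrow>
      \<exists>q\<in>subalg S. lead_monom q = lead_monom f \<and> lead_coeff q = lead_coeff f"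
  shows "A \<subseteq> subalg S"
proof
  let ?measure = "\<lambda>f. map (lookup (lead_monom f)) [0..<n]"
  have zero: "0 \<in> subalg S"
    using subalg.const[of 0 S] by (simp add: Const_def)
  fix f assume "f \<in> A"
  then show "f \<in> subalg S"
  proof (induction f rule: wf_induct_rule[OF wf_inv_image[OF wf_lex[OF wf_less_than], of ?measure]])
    case (1 f)
    show ?case
    proof (cases "f = 0")
      case False
      then obtain q where q: "q \<in> subalg S" "lead_monom q = lead_monom f" "lead_coeff q = lead_coeff f"
        using lead_term "1.prems" by blast
      have "f - q \<in> subalg S"
      proof (cases "f = q")
        case False
        then have "lead_monom (f - q) < lead_monom f"
          using lead_monom_diff_less q(2,3) by blast
        then have "(f - q, f) \<in> inv_image (lex less_than) ?measure"
          using monom_less_imp_lex bounded[OF "1.prems" \<open>f \<noteq> 0\<close>] by simp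
        moreover have "f - q \<in> A"
          using diff "1.prems" q(1) subalg_subset by blast
        ultimately show ?thesis
          using "1.IH" by blast
      qed (simp add: zero)
      then show ?thesis
        using q(1) subalg.add[of "f - q" S q] by simp
    qed (simp add: zero)
  qed
qed

section \<open>Exchange of exponents\<close>

lemma lookup_Var_mult:
  "lookup (Var a * q) n = (if 0 < lookup n a then lookup q (n - unit_monom a) else 0)"
proof -
  have "lookup (Var a * q) n = (\<Sum>v\<in>keys q. lookup q v when unit_monom a + v = n)"
    unfolding mult_eq_sum_monoms[of "Var a" q] by (simp add: Var_def lookup_sum lookup_single)
  also have "\<dots> = (\<Sum>v\<in>keys q. if v = n - unit_monom a \<and> 0 < lookup n a then lookup q v else 0)"
  proof (intro sum.cong refl)
    fix v
    have "unit_monom a + v = n \<longleftrightarrow> v = n - unit_monom a \<and> 0 < lookup n a"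
    proof
      assume "unit_monom a + v = n"
      then show "v = n - unit_monom a \<and> 0 < lookup n a"
        by (auto simp: lookup_add)
    next
      assume "v = n - unit_monom a \<and> 0 < lookup n a"
      then show "unit_monom a + v = n"
        using add_unit_monom_diff[of n a] by (metis add.commute)
    qed
    then show "(lookup q v when unit_monom a + v = n)
        = (if v = n - unit_monom a \<and> 0 < lookup n a then lookup q v else 0)"
      by simp
  qed
  also have "\<dots> = (if 0 < lookup n a then lookup q (n - unit_monom a) else 0)"
    by (cases "0 < lookup n a") (simp_all add: in_keys_iff)
  finally show ?thesis .
qed

text \<open>Compare the coefficients of \<open>m - unit_monom i + unit_monom a\<close> on both sides.\<close>

lemma keys_exchange_if_partial_deriv_eq:
  assumes eq: "Var a * partial_deriv i f = Var b * partial_deriv j f"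
    and "m \<in> keys f" "0 < lookup m i"
  shows "0 < lookup (m - unit_monom i + unit_monom a) b"
    and "m - unit_monom i + unit_monom a - unit_monom b + unit_monom j \<in> keys f"
proof -
  let ?n = "m - unit_monom i + unit_monom a"
  have "lookup (Var a * partial_deriv i f) ?n = of_nat (lookup m i) * lookup f m"
    using assms(3) add_unit_monom_diff[OF assms(3)]
    by (simp add: lookup_Var_mult lookup_partial_deriv lookup_add lookup_minus)
  then have "lookup (Var b * partial_deriv j f) ?n \<noteq> 0"
    using eq assms(2,3) by (simp add: in_keys_iff)
  then show "0 < lookup ?n b" "?n - unit_monom b + unit_monom j \<in> keys f"
    by (simp_all add: lookup_Var_mult lookup_partial_deriv in_keys_iff split: if_splits)
qed

lemma lead_monom_exponent_eq_0_if_partial_deriv_eq: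
  assumes eq: "Var a * partial_deriv i f = Var b * partial_deriv j f"
    and "a < b" "a < i" "a < j" "f \<noteq> 0"
  shows "lookup (lead_monom f) i = 0"
proof (rule ccontr)
  let ?m = "lead_monom f"
  let ?n = "?m - unit_monom i + unit_monom a - unit_monom b + unit_monom j"
  assume "lookup ?m i \<noteq> 0"
  then have "?n \<in> keys f"
    using keys_exchange_if_partial_deriv_eq(2)[OF eq lead_monom_in_keys[OF \<open>f \<noteq> 0\<close>]] by simp
  moreover have "?m < ?n"
    by (rule monom_lessI[of a])
       (use assms(2-4) in \<open>auto simp: lookup_add lookup_minus lookup_single when_def\<close>)
  ultimately show False
    using le_lead_monom leD by blast
qed

lemma exponent_le_if_partial_deriv_eq:
  assumes eq: "Var a * partial_deriv i f = Var b * partial_deriv j f"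
    and "distinct [a, b, i, j]" "m \<in> keys f"
  shows "lookup m i \<le> lookup m b"
  using assms(3)
proof (induction "lookup m i" arbitrary: m)
  case 0
  then show ?case
    by simp
next
  case (Suc k)
  let ?n = "m - unit_monom i + unit_monom a - unit_monom b + unit_monom j"
  have "0 < lookup m i"
    using Suc.hyps(2) by simp
  then have "0 < lookup m b" "?n \<in> keys f"
    using keys_exchange_if_partial_deriv_eq[OF eq Suc.prems] assms(2)
    by (auto simp: lookup_add lookup_minus lookup_single when_def)
  moreover have "lookup ?n i = k" "lookup ?n b = lookup m b - 1"
    using Suc.hyps(2) assms(2) by (auto simp: lookup_add lookup_minus lookup_single when_def)
  ultimately show ?case
    using Suc.hyps(1)[of ?n] Suc.hyps(2) by simp
qed

section \<open>The invariant algebra\<close>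

definition omega_dot_v :: rpoly where
  "omega_dot_v = Var 0 * Var 3 + Var 1 * Var 4 + Var 2 * Var 5"

lemma in_R6_add: "in_R6 p \<Longrightarrow> in_R6 q \<Longrightarrow> in_R6 (p + q)"
  using keys_add[of p q] by (auto simp: in_R6_def)

lemma in_R6_diff: "in_R6 p \<Longrightarrow> in_R6 q \<Longrightarrow> in_R6 (p - q)"
  using keys_diff[of p q] by (auto simp: in_R6_def)

lemma in_R6_mult:
  assumes "in_R6 p" "in_R6 q"
  shows "in_R6 (p * q)"
  unfolding in_R6_def
proof
  fix m assume "m \<in> keys (p * q)"
  then obtain u v where "u \<in> keys p" "v \<in> keys q" "m = u + v"
    using keys_mult[of p q] by blast
  then show "keys m \<subseteq> {..<6}"
    using assms keys_add[of u v] unfolding in_R6_def by blast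
qed

lemma in_R6_Const: "in_R6 (Const c)"
  by (simp add: in_R6_def Const_def)

lemma in_R6_Var: "i < 6 \<Longrightarrow> in_R6 (Var i)"
  by (simp add: in_R6_def Var_def)

lemma invariant_alg_add: "p \<in> invariant_alg \<Longrightarrow> q \<in> invariant_alg \<Longrightarrow> p + q \<in> invariant_alg"
  by (simp add: invariant_alg_def in_R6_add eval_add)

lemma invariant_alg_diff: "p \<in> invariant_alg \<Longrightarrow> q \<in> invariant_alg \<Longrightarrow> p - q \<in> invariant_alg"
  by (simp add: invariant_alg_def in_R6_diff eval_diff)

lemma invariant_alg_mult: "p \<in> invariant_alg \<Longrightarrow> q \<in> invariant_alg \<Longrightarrow> p * q \<in> invariant_alg"
  by (simp add: invariant_alg_def in_R6_mult eval_mult)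

lemma Const_in_invariant_alg: "Const c \<in> invariant_alg"
  by (simp add: invariant_alg_def in_R6_Const)

lemma Var_in_invariant_alg: "i < 3 \<Longrightarrow> Var i \<in> invariant_alg"
  by (simp add: invariant_alg_def in_R6_Var act_def)

lemma omega_dot_v_in_invariant_alg: "omega_dot_v \<in> invariant_alg"
  by (simp add: invariant_alg_def omega_dot_v_def in_R6_add in_R6_mult in_R6_Var eval_add eval_mult
      act_def algebra_simps)

lemma subalg_subset_invariant_alg:
  assumes "S \<subseteq> invariant_alg"
  shows "subalg S \<subseteq> invariant_alg"
proof
  fix p assume "p \<in> subalg S"
  then show "p \<in> invariant_alg"
    by induction (use assms in \<open>auto intro: Const_in_invariant_alg invariant_alg_add invariant_alg_mult\<close>)
qed

lemma prod_mset_in_subalg: "set_mset M \<subseteq> subalg S \<Longrightarrow> prod_mset M \<in> subalg S"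
proof (induction M)
  case empty
  then show ?case
    using subalg.const[of 1 S] by (simp add: Const_def)
next
  case (add x M)
  then show ?case
    by (simp add: subalg.mult)
qed

lemma partial_deriv_eqs_if_invariant:
  assumes "f \<in> invariant_alg"
  shows "Var 0 * partial_deriv 4 f = Var 1 * partial_deriv 3 f"
    and "Var 0 * partial_deriv 5 f = Var 2 * partial_deriv 3 f"
proof -
  have invariant: "eval f (act r1 r2 r3 x) = eval f x" for r1 r2 r3 x
    using assms by (simp add: invariant_alg_def)
  show "Var 0 * partial_deriv 4 f = Var 1 * partial_deriv 3 f"
  proof (rule partial_deriv_eq_if_flow_invariant)
    fix t x
    have "x(4 := x 4 + t * x 0, 3 := x 3 - t * x 1) = act 0 0 t x"
      by (rule ext) (simp add: act_def)
    then show "eval f (x(4 := x 4 + t * x 0, 3 := x 3 - t * x 1)) = eval f x"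
      by (simp add: invariant)
  qed simp
  show "Var 0 * partial_deriv 5 f = Var 2 * partial_deriv 3 f"
  proof (rule partial_deriv_eq_if_flow_invariant)
    fix t x
    have "x(5 := x 5 + t * x 0, 3 := x 3 - t * x 2) = act 0 (- t) 0 x"
      by (rule ext) (simp add: act_def)
    then show "eval f (x(5 := x 5 + t * x 0, 3 := x 3 - t * x 2)) = eval f x"
      by (simp add: invariant)
  qed simp
qed

lemma lead_monom_invariant:
  assumes "f \<in> invariant_alg" "f \<noteq> 0"
  shows "keys (lead_monom f) \<subseteq> {..<6}"
    and "lookup (lead_monom f) 4 = 0"
    and "lookup (lead_monom f) 5 = 0"
    and "lookup (lead_monom f) 3 \<le> lookup (lead_monom f) 0"
proof -
  note eqs = partial_deriv_eqs_if_invariant[OF assms(1)]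
  show "keys (lead_monom f) \<subseteq> {..<6}"
    using assms lead_monom_in_keys by (auto simp: invariant_alg_def in_R6_def)
  show "lookup (lead_monom f) 4 = 0"
    by (rule lead_monom_exponent_eq_0_if_partial_deriv_eq[OF eqs(1)]) (simp_all add: assms(2))
  show "lookup (lead_monom f) 5 = 0"
    by (rule lead_monom_exponent_eq_0_if_partial_deriv_eq[OF eqs(2)]) (simp_all add: assms(2))
  show "lookup (lead_monom f) 3 \<le> lookup (lead_monom f) 0"
    by (rule exponent_le_if_partial_deriv_eq[OF eqs(1)[symmetric]])
       (simp_all add: lead_monom_in_keys assms(2))
qed

lemma lead_monom_Var: "lead_monom (Var i) = unit_monom i"
  and lead_coeff_Var: "lead_coeff (Var i) = 1"
  by (simp_all add: Var_def lead_monom_single lead_coeff_single)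

lemma lead_monom_omega_dot_v: "lead_monom omega_dot_v = unit_monom 0 + unit_monom 3"
  and lead_coeff_omega_dot_v: "lead_coeff omega_dot_v = 1"
proof -
  let ?a = "unit_monom 0 + unit_monom 3"
    and ?b = "unit_monom 1 + unit_monom 4"
    and ?c = "unit_monom 2 + unit_monom 5"
  have omega: "omega_dot_v
      = Poly_Mapping.single ?a 1 + Poly_Mapping.single ?b 1 + Poly_Mapping.single ?c 1"
    by (simp add: omega_dot_v_def Var_def mult_single)
  have "?b < ?a"
    by (rule monom_lessI[of 0]) (simp_all add: lookup_add lookup_single)
  moreover have "?c < ?a"
    by (rule monom_lessI[of 0]) (simp_all add: lookup_add lookup_single)
  ultimately have less: "?b < ?a" "?c < ?a" .
  then have coeff: "lookup omega_dot_v ?a = 1"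
    by (auto simp: omega lookup_add lookup_single)
  show lm: "lead_monom omega_dot_v = ?a"
  proof (rule lead_monom_eqI)
    show "?a \<in> keys omega_dot_v"
      using coeff by (simp add: in_keys_iff)
    show "u \<le> ?a" if "u \<in> keys omega_dot_v" for u
    proof -
      have "keys omega_dot_v \<subseteq> {?a, ?b, ?c}"
        unfolding omega
        using keys_add[of "Poly_Mapping.single ?a 1 + Poly_Mapping.single ?b 1" "Poly_Mapping.single ?c 1"]
          keys_add[of "Poly_Mapping.single ?a 1" "Poly_Mapping.single ?b (1::real)"]
        by auto
      then show ?thesis
        using that less by auto
    qed
  qed
  show "lead_coeff omega_dot_v = 1"
    using coeff by (simp add: lead_coeff_def lm)
qed

definition gen_factors :: "monom \<Rightarrow> rpoly multiset" where
  "gen_factors m =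
     replicate_mset (lookup m 0 - lookup m 3) (Var 0) + replicate_mset (lookup m 1) (Var 1)
     + replicate_mset (lookup m 2) (Var 2) + replicate_mset (lookup m 3) omega_dot_v"

lemma gen_factors_subset: "set_mset (gen_factors m) \<subseteq> {Var 0, Var 1, Var 2, omega_dot_v} - {0}"
  using lead_coeff_Var lead_coeff_omega_dot_v
  by (auto simp: gen_factors_def lead_coeff_eq_0_iff[symmetric])

lemma lookup_sum_mset_replicate_mset:
  "lookup (sum_mset (replicate_mset k m)) i = k * lookup m i"
  by (induction k) (simp_all del: sum_mset_replicate_mset add: lookup_add)

lemma sum_lead_monoms_gen_factors:
  assumes "keys m \<subseteq> {..<6}" "lookup m 4 = 0" "lookup m 5 = 0" "lookup m 3 \<le> lookup m 0"
  shows "sum_mset (image_mset lead_monom (gen_factors m)) = m"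
proof (rule poly_mapping_eqI)
  fix k
  have "lookup m k = 0" if "6 \<le> k"
    using assms(1) that by (auto simp: in_keys_iff)
  then show "lookup (sum_mset (image_mset lead_monom (gen_factors m))) k = lookup m k"
    using assms(2-4)
    by (cases "k = 4"; cases "k = 5";
        auto simp: gen_factors_def lead_monom_Var lead_monom_omega_dot_v lookup_add
          lookup_sum_mset_replicate_mset lookup_single when_def simp del: sum_mset_replicate_mset)
qed

lemma lead_monom_prod_gen_factors:
  "lead_monom (prod_mset (gen_factors m)) = sum_mset (image_mset lead_monom (gen_factors m))"
  and lead_coeff_prod_gen_factors: "lead_coeff (prod_mset (gen_factors m)) = 1"
proof -
  have "0 \<notin># gen_factors m"
    using gen_factors_subset by blast
  from lead_monom_prod_mset[OF this]
  show "lead_monom (prod_mset (gen_factors m)) = sum_mset (image_mset lead_monom (gen_factors m))"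
    and "lead_coeff (prod_mset (gen_factors m)) = 1"
    by (simp_all add: gen_factors_def lead_coeff_Var lead_coeff_omega_dot_v)
qed

lemma lead_monom_Const_mult:
  assumes "c \<noteq> 0" "p \<noteq> 0"
  shows "lead_monom (Const c * p) = lead_monom p \<and> lead_coeff (Const c * p) = c * lead_coeff p"
proof -
  have "Const c \<noteq> 0"
    using assms(1) by (metis Const_def lookup_single_eq lookup_zero)
  then show ?thesis
    using assms lead_monom_mult[of "Const c" p]
    by (simp add: Const_def lead_monom_single lead_coeff_single)
qed

lemma lead_monom_eq_sum_gen_factors:
  assumes "f \<in> invariant_alg" "f \<noteq> 0"
  shows "lead_monom f = sum_mset (image_mset lead_monom (gen_factors (lead_monom f)))"
  using sum_lead_monoms_gen_factors lead_monom_invariant[OF assms] by simp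

lemma lead_term_in_subalg:
  assumes "f \<in> invariant_alg" "f \<noteq> 0"
  shows "\<exists>q\<in>subalg {Var 0, Var 1, Var 2, omega_dot_v}.
           lead_monom q = lead_monom f \<and> lead_coeff q = lead_coeff f"
proof
  let ?P = "prod_mset (gen_factors (lead_monom f))"
  show "Const (lead_coeff f) * ?P \<in> subalg {Var 0, Var 1, Var 2, omega_dot_v}"
    using gen_factors_subset
    by (intro subalg.mult subalg.const prod_mset_in_subalg) (auto intro: subalg.gen)
  have "lead_monom ?P = lead_monom f" "lead_coeff ?P = 1"
    using lead_monom_prod_gen_factors lead_coeff_prod_gen_factors lead_monom_eq_sum_gen_factors[OF assms]
    by simp_all
  moreover have "?P \<noteq> 0" "lead_coeff f \<noteq> 0"
    using calculation(2) assms(2) by (auto simp: lead_coeff_eq_0_iff[symmetric])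
  ultimately show "lead_monom (Const (lead_coeff f) * ?P) = lead_monom f
      \<and> lead_coeff (Const (lead_coeff f) * ?P) = lead_coeff f"
    using lead_monom_Const_mult by simp
qed

lemma generators_subset_invariant_alg: "{Var 0, Var 1, Var 2, omega_dot_v} \<subseteq> invariant_alg"
  using Var_in_invariant_alg omega_dot_v_in_invariant_alg by auto

lemma invariant_alg_subset_subalg: "invariant_alg \<subseteq> subalg {Var 0, Var 1, Var 2, omega_dot_v}"
proof (rule subset_subalg_by_subduction)
  show "subalg {Var 0, Var 1, Var 2, omega_dot_v} \<subseteq> invariant_alg"
    by (rule subalg_subset_invariant_alg[OF generators_subset_invariant_alg])
  show "p - q \<in> invariant_alg" if "p \<in> invariant_alg" "q \<in> invariant_alg" for p q
    using that by (rule invariant_alg_diff)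
  show "keys (lead_monom f) \<subseteq> {..<6}" if "f \<in> invariant_alg" "f \<noteq> 0" for f
    using that by (rule lead_monom_invariant(1))
  show "\<exists>q\<in>subalg {Var 0, Var 1, Var 2, omega_dot_v}. lead_monom q = lead_monom f \<and> lead_coeff q = lead_coeff f"
    if "f \<in> invariant_alg" "f \<noteq> 0" for f
    using that by (rule lead_term_in_subalg)
qed

theorem mainTheorem2:
  shows "sagbi_basis {Var 0, Var 1, Var 2, Var 0 * Var 3 + Var 1 * Var 4 + Var 2 * Var 5}
           invariant_alg
       \<and> subalg {Var 0, Var 1, Var 2, Var 0 * Var 3 + Var 1 * Var 4 + Var 2 * Var 5}
           = invariant_alg"
proof -
  let ?S = "{Var 0, Var 1, Var 2, omega_dot_v}"
  have "sagbi_basis ?S invariant_alg"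
    unfolding sagbi_basis_def
    using generators_subset_invariant_alg gen_factors_subset lead_monom_eq_sum_gen_factors by blast
  moreover have "subalg ?S = invariant_alg"
    using subalg_subset_invariant_alg[OF generators_subset_invariant_alg] invariant_alg_subset_subalg by blast
  ultimately show ?thesis
    by (simp add: omega_dot_v_def)
qed

end
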